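(* Let $k$ be a field and let $V_1\xrightarrow{f}V_2\xrightarrow{g}V_3$ be a complex of finite-dimensional $k$-vector spaces, with dual complex $V_3^*\xrightarrow{g^*}V_2^*\xrightarrow{f^*}V_1^*$. Fix a nondegenerate bilinear pairing $\langle\,,\rangle$ on $V_2$ and identify $V_2$ with $V_2^*$ via it. Assume $\mathrm{Im}\,f\subset\mathrm{Im}\,g^*$ (under this identification). Then the identification $V_2=V_2^*$ induces a map $\mathrm{Ker}\,g/\mathrm{Im}\,f\to\mathrm{Ker}\,f^*/\mathrm{Im}\,g^*$, and this map is an isomorphism if and only if $\mathrm{Ker}\,g\cap\mathrm{Im}\,g^*\subset\mathrm{Im}\,f$.
   Formalization: By hypothesis the identification $V_2=V_2^*$ also sends Ker g into $\mathrm{Ker}\,f^*$, that is, <v, f(x)> = 0 for every v in Ker g and x in $V_1$. The statement above fails without it. *)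

theory Defs
  imports Complex_Main "HOL-Library.Function_Algebras"
begin

text \<open>Finite-dimensional vector spaces over a field 'k are modelled as types 'v
with a scalar multiplication s :: 'k \<Rightarrow> 'v \<Rightarrow> 'v forming a finite-dimensional
vector space (locale finite_dimensional_vector_space).\<close>

definition dual_space :: "('k::field \<Rightarrow> 'v::ab_group_add \<Rightarrow> 'v) \<Rightarrow> ('v \<Rightarrow> 'k) set" where
  "dual_space s = {l. Vector_Spaces.linear s (*) l}"

definition dual_map :: "('v \<Rightarrow> 'w) \<Rightarrow> ('w \<Rightarrow> 'k) \<Rightarrow> ('v \<Rightarrow> 'k)" where
  "dual_map h l = l \<circ> h"

definition nondeg_bilinear :: "('k::field \<Rightarrow> 'v::ab_group_add \<Rightarrow> 'v) \<Rightarrow> ('v \<Rightarrow> 'v \<Rightarrow> 'k) \<Rightarrow> bool" where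
  "nondeg_bilinear s b \<longleftrightarrow>
     (\<forall>u. Vector_Spaces.linear s (*) (b u)) \<and>
     (\<forall>v. Vector_Spaces.linear s (*) (\<lambda>u. b u v)) \<and>
     (\<forall>u. (\<forall>v. b u v = 0) \<longrightarrow> u = 0) \<and>
     (\<forall>v. (\<forall>u. b u v = 0) \<longrightarrow> v = 0)"

definition pair_iso :: "('v \<Rightarrow> 'v \<Rightarrow> 'k) \<Rightarrow> 'v \<Rightarrow> ('v \<Rightarrow> 'k)" where
  "pair_iso b v = b v"

text \<open>Quotient A/B of a subspace A by a subspace B \<subseteq> A, as the set of cosets
 (restricted to A).\<close>
definition quot :: "'v::ab_group_add set \<Rightarrow> 'v set \<Rightarrow> 'v set set" where
  "quot A B = (\<lambda>a. {x \<in> A. x - a \<in> B}) ` A"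

text \<open>The map A/B \<rightarrow> C/D induced by a map phi (with phi A \<subseteq> C, phi B \<subseteq> D):
 it sends the coset of a to the coset of phi a.\<close>
definition induced_quot_map ::
  "('v \<Rightarrow> 'w::ab_group_add) \<Rightarrow> 'w set \<Rightarrow> 'w set \<Rightarrow> 'v set \<Rightarrow> 'w set" where
  "induced_quot_map phi C D X = {y \<in> C. \<exists>x\<in>X. y - phi x \<in> D}"

end

theory Submission
  imports Defs
begin

(* Everything is pulled back to V2 along v \<mapsto> \<langle>v,-\<rangle>. Since Im g* is the annihilator of
  K = Ker g, and every functional is some \<langle>v,-\<rangle>, the induced map becomes K/I \<rightarrow> I\<^sup>\<bottom>/K\<^sup>\<bottom> with
  I = Im f and left orthogonals taken with respect to the pairing. Its kernel is (K \<inter> K\<^sup>\<bottom>)/I,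
  which is the injectivity criterion. Surjectivity then comes for free: dim U\<^sup>\<bottom> = dim V2 - dim U,
  so once K \<inter> K\<^sup>\<bottom> = I the subspace K + K\<^sup>\<bottom> \<subseteq> I\<^sup>\<bottom> has dimension dim V2 - dim I and fills I\<^sup>\<bottom>. *)

abbreviation fun_scale :: "'k::field \<Rightarrow> ('a \<Rightarrow> 'k) \<Rightarrow> 'a \<Rightarrow> 'k" where
  "fun_scale c l \<equiv> (\<lambda>x. c * l x)"

lemma vector_space_fun_scale: "vector_space (fun_scale :: 'k::field \<Rightarrow> ('a \<Rightarrow> 'k) \<Rightarrow> _)"
  by unfold_locales (auto simp: fun_eq_iff algebra_simps)

lemma vector_space_field: "vector_space ((*) :: 'k::field \<Rightarrow> 'k \<Rightarrow> 'k)"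
  by unfold_locales (auto simp: algebra_simps)

definition annihilator :: "('k::field \<Rightarrow> 'v::ab_group_add \<Rightarrow> 'v) \<Rightarrow> 'v set \<Rightarrow> ('v \<Rightarrow> 'k) set" where
  "annihilator s U = {l \<in> dual_space s. \<forall>u\<in>U. l u = 0}"

lemma subspace_annihilator:
  fixes s :: "'k::field \<Rightarrow> 'v::ab_group_add \<Rightarrow> 'v"
  assumes "vector_space s"
  shows "module.subspace fun_scale (annihilator s U)"
proof -
  interpret F: vector_space "fun_scale :: 'k \<Rightarrow> ('v \<Rightarrow> 'k) \<Rightarrow> _"
    by (rule vector_space_fun_scale)
  show ?thesis
    using assms vector_space_field
    by (intro F.subspaceI) (auto simp: annihilator_def dual_space_def Vector_Spaces.linear_iff algebra_simps)
qed

lemma kernel_dual_map_eq_annihilator: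
  "{l \<in> dual_space s1. dual_map f l = (\<lambda>_. 0)} = annihilator s1 (range f)"
  by (auto simp: annihilator_def dual_map_def fun_eq_iff)

text \<open>The factor is l composed with a right inverse of g on the range of g.\<close>

lemma linear_factors_through:
  assumes "vector_space_pair s1 s2" and g: "Vector_Spaces.linear s1 s2 g"
    and l: "Vector_Spaces.linear s1 t l" and ker: "\<And>x. g x = 0 \<Longrightarrow> l x = 0"
  obtains m where "Vector_Spaces.linear s2 t m" "l = m \<circ> g"
proof -
  interpret vector_space_pair s1 s2 by fact
  obtain r where r: "Vector_Spaces.linear s2 s1 r" and gr: "\<And>y. y \<in> range g \<Longrightarrow> g (r y) = y"
    using linear_exists_right_inverse_on[OF g vs1.subspace_UNIV] by auto
  have "Vector_Spaces.linear s2 t (l \<circ> r)"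
    using r l by (rule Vector_Spaces.linear_compose)
  have "l x = l (r (g x))" for x
  proof -
    have "g (x - r (g x)) = 0"
      using g gr[of "g x"] by (simp add: linear_iff_module_hom module_hom.diff)
    then have "l (x - r (g x)) = 0" by (rule ker)
    then show ?thesis
      using l by (simp add: linear_iff_module_hom module_hom.diff)
  qed
  then have "l = (l \<circ> r) \<circ> g" by (simp add: fun_eq_iff)
  with \<open>Vector_Spaces.linear s2 t (l \<circ> r)\<close> show thesis by (rule that)
qed

lemma range_dual_map_eq_annihilator:
  assumes "vector_space_pair s1 s2" and g: "Vector_Spaces.linear s1 s2 g"
  shows "dual_map g ` dual_space s2 = annihilator s1 {x. g x = 0}"
proof
  show "dual_map g ` dual_space s2 \<subseteq> annihilator s1 {x. g x = 0}"
    using g Vector_Spaces.linear_compose[OF g]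
    by (auto simp: annihilator_def dual_space_def dual_map_def linear_iff_module_hom module_hom.zero)
  show "annihilator s1 {x. g x = 0} \<subseteq> dual_map g ` dual_space s2"
  proof
    fix l assume "l \<in> annihilator s1 {x. g x = 0}"
    then obtain m where "Vector_Spaces.linear s2 (*) m" "l = m \<circ> g"
      using linear_factors_through[OF assms, of "(*)" l] by (auto simp: annihilator_def dual_space_def)
    then show "l \<in> dual_map g ` dual_space s2"
      by (auto simp: dual_map_def dual_space_def)
  qed
qed

definition coset :: "'v::ab_group_add set \<Rightarrow> 'v set \<Rightarrow> 'v \<Rightarrow> 'v set" where
  "coset A B a = {x \<in> A. x - a \<in> B}"

lemma quot_eq_image_coset: "quot A B = coset A B ` A"
  by (simp add: quot_def coset_def)

lemma coset_eq_iff: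
  assumes "module s" "module.subspace s B" "a \<in> A" "a' \<in> A"
  shows "coset A B a = coset A B a' \<longleftrightarrow> a - a' \<in> B"
proof
  interpret module s by fact
  assume "coset A B a = coset A B a'"
  moreover have "a \<in> coset A B a"
    using assms by (simp add: coset_def subspace_0)
  ultimately show "a - a' \<in> B" by (simp add: coset_def)
next
  interpret module s by fact
  assume "a - a' \<in> B"
  then have "x - a \<in> B \<longleftrightarrow> x - a' \<in> B" for x
    using subspace_add[OF assms(2), of "x - a" "a - a'"] subspace_diff[OF assms(2), of "x - a'" "a - a'"]
    by auto
  then show "coset A B a = coset A B a'" by (auto simp: coset_def)
qed

context
  fixes s :: "'k::field \<Rightarrow> 'v::ab_group_add \<Rightarrow> 'v" and t :: "'k \<Rightarrow> 'w::ab_group_add \<Rightarrow> 'w"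
    and \<phi> :: "'v \<Rightarrow> 'w" and I K :: "'v set" and J L :: "'w set"
  assumes \<phi>: "Vector_Spaces.linear s t \<phi>"
    and I: "module.subspace s I" and K: "module.subspace s K"
    and J: "module.subspace t J" and \<phi>I: "\<phi> ` I \<subseteq> J" and \<phi>K: "\<phi> ` K \<subseteq> L"
begin

interpretation Vector_Spaces.linear s t \<phi> by (fact \<phi>)

lemma induced_quot_map_coset:
  assumes "a \<in> K"
  shows "induced_quot_map \<phi> L J (coset K I a) = coset L J (\<phi> a)"
proof -
  have "y - \<phi> a \<in> J" if "y - \<phi> x \<in> J" "x - a \<in> I" for x y
  proof -
    have "\<phi> (x - a) \<in> J" using that(2) \<phi>I by blast
    from vs2.subspace_add[OF J that(1) this] show ?thesis by (simp add: diff)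
  qed
  moreover have "a \<in> coset K I a"
    using assms vs1.subspace_0[OF I] by (simp add: coset_def)
  ultimately show ?thesis
    by (auto simp: induced_quot_map_def coset_def)
qed

lemma coset_image_eq_iff:
  assumes "a \<in> K" "a' \<in> K"
  shows "coset L J (\<phi> a) = coset L J (\<phi> a') \<longleftrightarrow> \<phi> (a - a') \<in> J"
  using coset_eq_iff[OF vs2.module_axioms J, of "\<phi> a" L "\<phi> a'"] \<phi>K assms
  by (simp add: diff image_subset_iff)

lemma inj_on_induced_quot_map_iff:
  "inj_on (induced_quot_map \<phi> L J) (quot K I) \<longleftrightarrow> K \<inter> \<phi> -` J \<subseteq> I"
proof -
  have "inj_on (induced_quot_map \<phi> L J) (quot K I) \<longleftrightarrow>
      (\<forall>a\<in>K. \<forall>a'\<in>K. \<phi> (a - a') \<in> J \<longrightarrow> a - a' \<in> I)"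
    by (auto simp: inj_on_def quot_eq_image_coset induced_quot_map_coset coset_image_eq_iff
        coset_eq_iff[OF vs1.module_axioms I])
  also have "\<dots> \<longleftrightarrow> K \<inter> \<phi> -` J \<subseteq> I"
    using vs1.subspace_diff[OF K] vs1.subspace_0[OF K] by force
  finally show ?thesis .
qed

lemma image_induced_quot_map_eq_iff:
  "induced_quot_map \<phi> L J ` quot K I = quot L J \<longleftrightarrow> (\<forall>l\<in>L. \<exists>x\<in>K. l - \<phi> x \<in> J)"
proof -
  have cosL: "coset L J l = coset L J (\<phi> x) \<longleftrightarrow> l - \<phi> x \<in> J" if "l \<in> L" "x \<in> K" for l x
    using coset_eq_iff[OF vs2.module_axioms J that(1)] \<phi>K that(2) by blast
  have img: "induced_quot_map \<phi> L J ` quot K I = coset L J ` \<phi> ` K"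
    by (auto simp: quot_eq_image_coset induced_quot_map_coset image_comp)
  have "coset L J ` \<phi> ` K \<subseteq> coset L J ` L"
    using \<phi>K by (rule image_mono)
  then have "coset L J ` \<phi> ` K = coset L J ` L \<longleftrightarrow> coset L J ` L \<subseteq> coset L J ` \<phi> ` K"
    by blast
  also have "\<dots> \<longleftrightarrow> (\<forall>l\<in>L. \<exists>x\<in>K. coset L J l = coset L J (\<phi> x))"
    by (simp add: image_subset_iff image_image image_iff)
  finally show ?thesis
    by (simp add: img cosL quot_eq_image_coset[of L J])
qed

lemma bij_betw_induced_quot_map_iff:
  "bij_betw (induced_quot_map \<phi> L J) (quot K I) (quot L J) \<longleftrightarrow>
     K \<inter> \<phi> -` J \<subseteq> I \<and> (\<forall>l\<in>L. \<exists>x\<in>K. l - \<phi> x \<in> J)"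
  unfolding bij_betw_def inj_on_induced_quot_map_iff image_induced_quot_map_eq_iff ..

end

locale nondeg_pairing = finite_dimensional_vector_space scale Basis
  for scale :: "'k::field \<Rightarrow> 'v::ab_group_add \<Rightarrow> 'v" (infixr \<open>*s\<close> 75) and Basis +
  fixes b :: "'v \<Rightarrow> 'v \<Rightarrow> 'k"
  assumes nondeg: "nondeg_bilinear scale b"
begin

definition orth :: "'v set \<Rightarrow> 'v set" where
  "orth U = {v. \<forall>u\<in>U. b v u = 0}"

lemma pairing_in_dual_space: "b v \<in> dual_space scale"
  using nondeg by (simp add: nondeg_bilinear_def dual_space_def)

lemma linear_pairing_left: "Vector_Spaces.linear scale (*) (\<lambda>v. b v w)"
  using nondeg by (simp add: nondeg_bilinear_def)

lemma linear_pairing: "Vector_Spaces.linear scale fun_scale b"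
  using linear_pairing_left vector_space_axioms vector_space_fun_scale
  by (auto simp: Vector_Spaces.linear_iff fun_eq_iff)

interpretation pairing: Vector_Spaces.linear scale fun_scale b
  by (rule linear_pairing)

lemma pairing_inject: "b x = b y \<longleftrightarrow> x = y"
proof
  assume "b x = b y"
  then have "\<forall>w. b (x - y) w = 0"
    by (simp add: pairing.diff)
  then have "x - y = 0"
    using nondeg unfolding nondeg_bilinear_def by blast
  then show "x = y" by simp
qed simp

lemma dual_space_eqI:
  assumes "l1 \<in> dual_space scale" "l2 \<in> dual_space scale" "\<And>e. e \<in> Basis \<Longrightarrow> l1 e = l2 e"
  shows "l1 = l2"
proof
  interpret vector_space_pair scale "(*) :: 'k \<Rightarrow> 'k \<Rightarrow> 'k"
    using vector_space_axioms vector_space_field by (simp add: vector_space_pair_def)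
  show "l1 x = l2 x" for x
    using linear_eq_on[of l1 l2 x Basis] assms by (simp add: dual_space_def span_Basis)
qed

lemma pairing_mem_annihilator_iff: "b v \<in> annihilator scale U \<longleftrightarrow> v \<in> orth U"
  using pairing_in_dual_space by (simp add: annihilator_def orth_def)

lemma subspace_orth: "subspace (orth U)"
proof -
  have "orth U = b -` annihilator scale U"
    using pairing_mem_annihilator_iff by auto
  then show ?thesis
    using pairing.subspace_vimage[OF subspace_annihilator[OF vector_space_axioms]] by simp
qed

lemma orth_antimono: "U \<subseteq> W \<Longrightarrow> orth W \<subseteq> orth U"
  by (auto simp: orth_def)

text \<open>Riesz representation: the pairing in coordinates, v \<mapsto> \<Sum>e. b v e *s e, is an injective
  endomorphism, hence onto.\<close>

lemma range_pairing: "range b = dual_space scale"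
proof
  show "range b \<subseteq> dual_space scale" using pairing_in_dual_space by auto
  define \<Psi> where "\<Psi> v = (\<Sum>e\<in>Basis. b v e *s e)" for v
  have coord: "c e = d e"
    if "(\<Sum>e\<in>Basis. c e *s e) = (\<Sum>e\<in>Basis. d e *s e)" "e \<in> Basis" for c d e
  proof -
    have "(\<Sum>e\<in>Basis. (c e - d e) *s e) = 0"
      using that(1) by (simp add: scale_left_diff_distrib sum_subtractf)
    then show ?thesis
      using independent_Basis finite_Basis that(2) by (auto simp: independent_explicit)
  qed
  have "Vector_Spaces.linear scale scale \<Psi>"
    using vector_space_axioms
    by (auto simp: Vector_Spaces.linear_iff \<Psi>_def pairing.add pairing.scale
        scale_left_distrib sum.distrib scale_sum_right)
  moreover have "inj \<Psi>"
  proof (rule injI)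
    fix x y assume "\<Psi> x = \<Psi> y"
    then have "b x = b y"
      using coord[of "b x" "b y"] by (intro dual_space_eqI pairing_in_dual_space) (simp add: \<Psi>_def)
    then show "x = y" by (simp add: pairing_inject)
  qed
  ultimately have "surj \<Psi>" by (rule linear_inj_imp_surj)
  show "dual_space scale \<subseteq> range b"
  proof
    fix l assume l: "l \<in> dual_space scale"
    obtain v where "\<Psi> v = (\<Sum>e\<in>Basis. l e *s e)"
      using \<open>surj \<Psi>\<close> by (metis surjD)
    then have "b v = l"
      using coord[of "b v" l] by (intro dual_space_eqI pairing_in_dual_space l) (simp add: \<Psi>_def)
    then show "l \<in> range b" by blast
  qed
qed

lemma annihilator_eq_image_orth: "annihilator scale U = b ` orth U"
proof (intro equalityI subsetI)
  fix l assume l: "l \<in> annihilator scale U"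
  then obtain v where "l = b v"
    using range_pairing by (auto simp: annihilator_def)
  with l show "l \<in> b ` orth U"
    by (auto simp: pairing_mem_annihilator_iff)
qed (auto simp: pairing_mem_annihilator_iff[symmetric])

lemma dual_basis_exists:
  assumes "independent C" "span C = UNIV"
  obtains u where "\<And>e x. b (u e) x = representation C x e"
proof -
  have "(\<lambda>x. representation C x e) \<in> range b" for e
    using range_pairing linear_representation[OF assms] by (simp add: dual_space_def)
  then have "\<forall>e. \<exists>v. b v = (\<lambda>x. representation C x e)"
    by (metis rangeE)
  then obtain u where u: "\<And>e. b (u e) = (\<lambda>x. representation C x e)" by metis
  show thesis by (rule that[of u]) (simp add: u)
qed

context
  fixes C :: "'v set" and u :: "'v \<Rightarrow> 'v"
  assumes C: "independent C" "span C = UNIV"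
    and u: "\<And>e x. b (u e) x = representation C x e"
begin

lemma pairing_dual_basis: "e' \<in> C \<Longrightarrow> b (u e) e' = (if e = e' then 1 else 0)"
  using representation_basis[OF C(1)] by (simp add: u)

lemma dual_basis_expansion: "(\<Sum>e\<in>C. b v e *s u e) = v"
proof -
  have finC: "finite C" using C(1) by (rule finiteI_independent)
  interpret bv: Vector_Spaces.linear scale "(*)" "b v"
    using pairing_in_dual_space by (simp add: dual_space_def)
  have "b (\<Sum>e\<in>C. b v e *s u e) x = b v x" for x
  proof -
    interpret bx: Vector_Spaces.linear scale "(*)" "\<lambda>v. b v x"
      by (rule linear_pairing_left)
    have "b (\<Sum>e\<in>C. b v e *s u e) x = (\<Sum>e\<in>C. representation C x e * b v e)"
      by (simp add: bx.sum bx.scale u mult.commute)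
    also have "\<dots> = b v (\<Sum>e\<in>C. representation C x e *s e)"
      by (simp add: bv.sum bv.scale)
    also have "(\<Sum>e\<in>C. representation C x e *s e) = x"
      using C finC by (intro sum_representation_eq) auto
    finally show ?thesis .
  qed
  then have "b (\<Sum>e\<in>C. b v e *s u e) = b v" ..
  then show ?thesis by (simp only: pairing_inject)
qed

lemma inj_on_dual_basis: "inj_on u C"
proof (rule inj_onI)
  fix e e' assume "e \<in> C" "e' \<in> C" "u e = u e'"
  then have "b (u e) e' = 1" using pairing_dual_basis[of e' e'] by simp
  then show "e = e'" using pairing_dual_basis[OF \<open>e' \<in> C\<close>, of e] by (simp split: if_splits)
qed

lemma independent_dual_basis: "independent (u ` C)"
proof (rule card_le_dim_spanning)
  have finC: "finite C" using C(1) by (rule finiteI_independent)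
  then show "finite (u ` C)" by simp
  show "UNIV \<subseteq> span (u ` C)"
  proof
    fix v
    have "(\<Sum>e\<in>C. b v e *s u e) \<in> span (u ` C)"
      by (intro span_sum span_scale span_base) auto
    then show "v \<in> span (u ` C)" by (simp add: dual_basis_expansion)
  qed
  have "card C = dim UNIV"
    using dim_span[of C] dim_eq_card_independent[OF C(1)] by (simp add: C(2))
  then show "card (u ` C) \<le> dim UNIV"
    using card_image_le[OF finC] by simp
qed simp

lemma orth_eq_span_dual_basis:
  assumes A: "A \<subseteq> C" "A \<subseteq> U" "U \<subseteq> span A"
  shows "orth U = span (u ` (C - A))"
proof
  show "orth U \<subseteq> span (u ` (C - A))"
  proof
    fix v assume "v \<in> orth U"
    then have "b v e = 0" if "e \<in> A" for e
      using A(2) that by (auto simp: orth_def)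
    then have "(\<Sum>e\<in>A. b v e *s u e) = 0" by simp
    then have "v = (\<Sum>e\<in>C - A. b v e *s u e)"
      using sum.subset_diff[OF A(1) finiteI_independent[OF C(1)], of "\<lambda>e. b v e *s u e"]
      by (simp add: dual_basis_expansion)
    also have "\<dots> \<in> span (u ` (C - A))"
      by (intro span_sum span_scale span_base) auto
    finally show "v \<in> span (u ` (C - A))" .
  qed
  have "b (u e) x = 0" if "e \<in> C - A" "x \<in> U" for e x
  proof -
    have "representation C x e = representation A x e"
      using representation_extend[OF C(1) _ A(1)] A(3) that(2) by auto
    then show ?thesis
      using representation_ne_zero[of A x e] that(1) by (auto simp: u)
  qed
  then show "span (u ` (C - A)) \<subseteq> orth U"
    by (intro span_minimal subspace_orth) (auto simp: orth_def)
qed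

end

text \<open>Extend a basis A of U to a basis C; then orth U is spanned by the dual basis vectors
  u e with e \<in> C - A.\<close>

lemma dim_orth:
  assumes "subspace U"
  shows "dim (orth U) = dimension - dim U"
proof -
  obtain A where A: "A \<subseteq> U" "independent A" "U \<subseteq> span A" "card A = dim U"
    using basis_exists by blast
  define C where "C = extend_basis A"
  have C: "independent C" "span C = UNIV" "A \<subseteq> C"
    using A(2) by (simp_all add: C_def independent_extend_basis extend_basis_superset)
  have finC: "finite C" using C(1) by (rule finiteI_independent)
  have cardC: "card C = dimension"
    using dim_span[of C] dim_eq_card_independent[OF C(1)] by (simp add: C(2) dimension_def)
  obtain u where u: "\<And>e x. b (u e) x = representation C x e"
    using dual_basis_exists[OF C(1,2)] by blast
  have "dim (orth U) = card (u ` (C - A))"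
    using orth_eq_span_dual_basis[OF C(1,2) u C(3) A(1,3)]
      independent_mono[OF independent_dual_basis[OF C(1,2) u], of "u ` (C - A)"]
    by (simp add: dim_eq_card_independent image_mono)
  also have "\<dots> = card (C - A)"
    using inj_on_subset[OF inj_on_dual_basis[OF C(1,2) u], of "C - A"] by (simp add: card_image)
  also have "\<dots> = dimension - dim U"
    using card_Diff_subset[OF finite_subset[OF C(3) finC] C(3)] cardC A(4) by simp
  finally show ?thesis .
qed

lemma sum_subspace_orth_eq:
  assumes I: "subspace I" and K: "subspace K" and "I \<subseteq> K" "K \<subseteq> orth I"
    and KI: "K \<inter> orth K \<subseteq> I"
  shows "{x + y | x y. x \<in> K \<and> y \<in> orth K} = orth I"
proof (rule subspace_dim_equal)
  show "subspace (orth I)" by (rule subspace_orth)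
  show "subspace {x + y | x y. x \<in> K \<and> y \<in> orth K}"
    using K subspace_orth by (rule subspace_sums)
  show "{x + y | x y. x \<in> K \<and> y \<in> orth K} \<subseteq> orth I"
    using assms(3,4) orth_antimono[OF assms(3)] subspace_add[OF subspace_orth] by blast
  have "dim {x + y | x y. x \<in> K \<and> y \<in> orth K} + dim (K \<inter> orth K) = dim K + dim (orth K)"
    using K subspace_orth by (rule dim_sums_Int)
  moreover have "dim (K \<inter> orth K) \<le> dim I" using KI by (rule dim_subset)
  moreover have "dim K \<le> dimension" "dim I \<le> dimension" by (simp_all add: dim_subset_UNIV)
  ultimately show "dim (orth I) \<le> dim {x + y | x y. x \<in> K \<and> y \<in> orth K}"
    using dim_orth[OF I] dim_orth[OF K] by linarith
qed

lemma pairing_onto_mod_annihilator: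
  assumes "subspace I" "subspace K" "I \<subseteq> K" "K \<subseteq> orth I" "K \<inter> orth K \<subseteq> I"
    and "l \<in> annihilator scale I"
  shows "\<exists>x\<in>K. l - b x \<in> annihilator scale K"
proof -
  obtain v where v: "v \<in> orth I" "l = b v"
    using assms(6) by (auto simp: annihilator_eq_image_orth)
  then have "v \<in> {x + y | x y. x \<in> K \<and> y \<in> orth K}"
    using sum_subspace_orth_eq[OF assms(1-5)] by simp
  then obtain x y where "x \<in> K" "y \<in> orth K" "v = x + y" by blast
  moreover have "b (x + y) = b x + b y" by (rule pairing.add)
  ultimately have "x \<in> K" "l - b x \<in> annihilator scale K"
    using v(2) by (simp_all add: pairing_mem_annihilator_iff)
  then show ?thesis ..
qed

end

theorem lemma4p2:
  fixes s1 :: "'k::field \<Rightarrow> 'v1::ab_group_add \<Rightarrow> 'v1"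
    and s2 :: "'k \<Rightarrow> 'v2::ab_group_add \<Rightarrow> 'v2"
    and s3 :: "'k \<Rightarrow> 'v3::ab_group_add \<Rightarrow> 'v3"
    and B1 :: "'v1 set" and B2 :: "'v2 set" and B3 :: "'v3 set"
    and f :: "'v1 \<Rightarrow> 'v2" and g :: "'v2 \<Rightarrow> 'v3"
    and b :: "'v2 \<Rightarrow> 'v2 \<Rightarrow> 'k"
  assumes fd1: "finite_dimensional_vector_space s1 B1"
    and fd2: "finite_dimensional_vector_space s2 B2"
    and fd3: "finite_dimensional_vector_space s3 B3"
    and lin_f: "Vector_Spaces.linear s1 s2 f"
    and lin_g: "Vector_Spaces.linear s2 s3 g"
    and complex: "\<forall>x. g (f x) = 0"
    and pairing: "nondeg_bilinear s2 b"
    and im_f_sub: "pair_iso b ` range f \<subseteq> dual_map g ` dual_space s3"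
    and well_def: "pair_iso b ` {v. g v = 0} \<subseteq> {l \<in> dual_space s2. dual_map f l = (\<lambda>_. 0)}"
  shows "bij_betw
           (induced_quot_map (pair_iso b)
              {l \<in> dual_space s2. dual_map f l = (\<lambda>_. 0)} (dual_map g ` dual_space s3))
           (quot {v. g v = 0} (range f))
           (quot {l \<in> dual_space s2. dual_map f l = (\<lambda>_. 0)} (dual_map g ` dual_space s3))
         \<longleftrightarrow> {v. g v = 0} \<inter> (pair_iso b -` (dual_map g ` dual_space s3)) \<subseteq> range f"
proof -
  interpret V2: nondeg_pairing s2 B2 b
    using fd2 pairing by (simp add: nondeg_pairing_def nondeg_pairing_axioms_def)
  interpret lf: Vector_Spaces.linear s1 s2 f by (rule lin_f)
  interpret lg: Vector_Spaces.linear s2 s3 g by (rule lin_g)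
  define K where "K = {v. g v = 0}"
  define I where "I = range f"
  have K: "V2.subspace K" and I: "V2.subspace I" and "I \<subseteq> K"
    using lg.subspace_kernel lf.subspace_image[OF lf.vs1.subspace_UNIV] complex
    by (auto simp: K_def I_def)
  have b_eq: "pair_iso b = b" by (simp add: fun_eq_iff pair_iso_def)
  have Ks: "{l \<in> dual_space s2. dual_map f l = (\<lambda>_. 0)} = annihilator s2 I"
    unfolding I_def by (rule kernel_dual_map_eq_annihilator)
  have Is: "dual_map g ` dual_space s3 = annihilator s2 K"
    using range_dual_map_eq_annihilator[OF _ lin_g] fd2 fd3
    by (simp add: K_def vector_space_pair_def finite_dimensional_vector_space_def)
  have bI: "b ` I \<subseteq> annihilator s2 K" and bK: "b ` K \<subseteq> annihilator s2 I"
    using im_f_sub well_def by (simp_all add: b_eq Ks Is flip: K_def I_def)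
  then have "K \<subseteq> V2.orth I"
    by (auto simp: V2.pairing_mem_annihilator_iff[symmetric])
  have "K \<inter> b -` annihilator s2 K = K \<inter> V2.orth K"
    by (auto simp: V2.pairing_mem_annihilator_iff)
  then show ?thesis
    using bij_betw_induced_quot_map_iff[OF V2.linear_pairing I K
        subspace_annihilator[OF V2.vector_space_axioms] bI bK]
      V2.pairing_onto_mod_annihilator[OF I K \<open>I \<subseteq> K\<close> \<open>K \<subseteq> V2.orth I\<close>]
    by (simp add: b_eq Ks Is flip: K_def I_def) blast
qed

end
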